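(* Let $G=(V,E)$ be a connected, locally finite graph with edge weights $w_{xy}\ge w_{min}>0$ for all $xy\in E$ and $\mu\le\mu_{max}$ on $V$, and let $\alpha\in(0,1)$. Suppose $u:(0,\infty)\times V\to(0,\infty)$ is $C^1$ in time and satisfies $$\partial_t(\log u)\ge\Psi_\Upsilon(\log u)-\tfrac1\alpha\Psi_{\Upsilon_\alpha}(\log u)-\eta_\alpha(t)\quad\text{on }(0,\infty)\times V,$$ where $\eta_\alpha:(0,\infty)\to[0,\infty)$ is continuous. Then for any $0<t_1<t_2$ and $x_1,x_2\in V$, $$u(t_1,x_1)\le u(t_2,x_2)\exp\Big(\int_{t_1}^{t_2}\eta_\alpha(t)\,dt+\frac{2\mu_{max}\,d(x_1,x_2)^2}{w_{min}(1-\alpha)(t_2-t_1)}\Big).$$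
   Context: Graphs are undirected; $x\sim y$ means $xy\in E$; $w_{xy}=w_{yx}>0$; $\mu:V\to(0,\infty)$; $d$ is the combinatorial graph distance. For $H:\mathbb R\to\mathbb R$, $\Psi_H(v)(x)=\frac1{\mu(x)}\sum_{y\sim x}w_{xy}H(v(y)-v(x))$; $\Upsilon(z)=e^z-1-z$ and $\Upsilon_\alpha(z)=\Upsilon(\alpha z)$. *)

theory Defs
  imports "HOL-Analysis.Analysis"
begin

text \<open>Graphs: vertex set = the type 'a (UNIV), adjacency relation E (x ~ y iff E x y).\<close>

definition locally_finite :: "('a \<Rightarrow> 'a \<Rightarrow> bool) \<Rightarrow> bool" where
  "locally_finite E \<longleftrightarrow> (\<forall>x. finite {y. E x y})"

definition graph_connected :: "('a \<Rightarrow> 'a \<Rightarrow> bool) \<Rightarrow> bool" where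
  "graph_connected E \<longleftrightarrow> (\<forall>x y. \<exists>n. (E ^^ n) x y)"

definition gdist :: "('a \<Rightarrow> 'a \<Rightarrow> bool) \<Rightarrow> 'a \<Rightarrow> 'a \<Rightarrow> nat" where
  "gdist E x y = (LEAST n. (E ^^ n) x y)"

definition Psi :: "('a \<Rightarrow> 'a \<Rightarrow> bool) \<Rightarrow> ('a \<Rightarrow> 'a \<Rightarrow> real) \<Rightarrow> ('a \<Rightarrow> real)
    \<Rightarrow> (real \<Rightarrow> real) \<Rightarrow> ('a \<Rightarrow> real) \<Rightarrow> 'a \<Rightarrow> real" where
  "Psi E w \<mu> H v x = (1 / \<mu> x) * (\<Sum>y\<in>{y. E x y}. w x y * H (v y - v x))"

definition Upsilon :: "real \<Rightarrow> real" where
  "Upsilon z = exp z - 1 - z"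

definition Upsilon_alpha :: "real \<Rightarrow> real \<Rightarrow> real" where
  "Upsilon_alpha \<alpha> z = Upsilon (\<alpha> * z)"

end

theory Submission imports Defs begin

text \<open>
  Put \<open>V t x = ln (u t x) + \<integral>\<^sub>T\<^sub>0\<^sup>t \<eta>\<close>. The hypothesis becomes
  \<open>\<partial>\<^sub>t V \<ge> \<Psi>\<^sub>f(V)\<close> with \<open>f = \<Upsilon> - \<Upsilon>\<^sub>\<alpha>/\<alpha>\<close>, and \<open>f\<close> is nonnegative (convexity of \<open>exp\<close>) and
  satisfies \<open>f z \<ge> (1-\<alpha>) z\<^sup>2/2\<close> for \<open>z \<ge> 0\<close>. Hence \<open>V\<close> is nondecreasing in time, and on an
  edge \<open>x \<sim> y\<close>, with \<open>c = w\<^sub>m\<^sub>i\<^sub>n/\<mu>\<^sub>m\<^sub>a\<^sub>x\<close>, \<open>\<partial>\<^sub>t V(\<cdot>,y) \<ge> c (1-\<alpha>)/2 (V(\<cdot>,x) - V(\<cdot>,y))\<^sup>2\<close> whenever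
  \<open>V(\<cdot>,y) \<le> V(\<cdot>,x)\<close>. A Riccati-type comparison turns this into
  \<open>V(s,x) \<le> V(s',y) + K/(s'-s)\<close> with \<open>K = 2/(c(1-\<alpha>))\<close>. Along a shortest path of length
  \<open>d\<close>, with \<open>[t\<^sub>1,t\<^sub>2]\<close> cut into \<open>d\<close> equal pieces, the errors add up to \<open>K d\<^sup>2/(t\<^sub>2-t\<^sub>1)\<close>.
\<close>

definition Upsilon_gap :: "real \<Rightarrow> real \<Rightarrow> real" where
  "Upsilon_gap \<alpha> z = Upsilon z - 1 / \<alpha> * Upsilon_alpha \<alpha> z"

lemma Upsilon_gap_eq:
  "\<alpha> \<noteq> 0 \<Longrightarrow> Upsilon_gap \<alpha> z = exp z - 1 - exp (\<alpha> * z) / \<alpha> + 1 / \<alpha>"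
  by (simp add: Upsilon_gap_def Upsilon_def Upsilon_alpha_def field_simps)

lemma Upsilon_gap_nonneg:
  assumes "0 < \<alpha>" "\<alpha> < 1" shows "0 \<le> Upsilon_gap \<alpha> z"
proof -
  have "exp ((1 - \<alpha>) *\<^sub>R 0 + \<alpha> *\<^sub>R z) \<le> (1 - \<alpha>) * exp 0 + \<alpha> * exp z"
    using convex_onD[OF exp_convex, of \<alpha> 0 z] assms by simp
  then have "exp (\<alpha> * z) / \<alpha> \<le> (1 - \<alpha> + \<alpha> * exp z) / \<alpha>"
    using assms by (simp add: divide_right_mono)
  also have "\<dots> = 1 / \<alpha> - 1 + exp z"
    using assms by (simp add: field_simps)
  finally show ?thesis
    using assms by (simp add: Upsilon_gap_eq)
qed

lemma Upsilon_gap_ge_square: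
  assumes "0 < \<alpha>" "\<alpha> < 1" "0 \<le> z"
  shows "(1 - \<alpha>) / 2 * z\<^sup>2 \<le> Upsilon_gap \<alpha> z"
proof -
  define h where "h t = exp t - exp (\<alpha> * t) - (1 - \<alpha>) * t" for t
  have h_nonneg: "0 \<le> h t" if "0 \<le> t" for t
  proof -
    have "h 0 \<le> h t"
    proof (rule DERIV_nonneg_imp_increasing_open[OF that])
      fix s assume s: "0 < s" "s < t"
      have "exp (\<alpha> * s) \<le> exp s" "1 \<le> exp (\<alpha> * s)"
        using s assms by simp_all
      then have "0 \<le> (exp s - exp (\<alpha> * s)) + (1 - \<alpha>) * (exp (\<alpha> * s) - 1)"
        using assms by simp
      also have "\<dots> = exp s - \<alpha> * exp (\<alpha> * s) - (1 - \<alpha>)"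
        by (simp add: algebra_simps)
      finally have "0 \<le> exp s - \<alpha> * exp (\<alpha> * s) - (1 - \<alpha>)" .
      moreover have "(h has_real_derivative exp s - \<alpha> * exp (\<alpha> * s) - (1 - \<alpha>)) (at s)"
        unfolding h_def by (rule derivative_eq_intros refl | simp)+
      ultimately show "\<exists>y. (h has_real_derivative y) (at s) \<and> 0 \<le> y"
        by blast
    qed (unfold h_def, intro continuous_intros)
    then show ?thesis by (simp add: h_def)
  qed
  have gap: "Upsilon_gap \<alpha> t = exp t - 1 - exp (\<alpha> * t) / \<alpha> + 1 / \<alpha>" for t
    using assms by (simp add: Upsilon_gap_eq)
  define g where "g t = Upsilon_gap \<alpha> t - (1 - \<alpha>) / 2 * t\<^sup>2" for t
  have "g 0 \<le> g z"
  proof (rule DERIV_nonneg_imp_increasing_open[OF assms(3)])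
    fix s assume "0 < s" "s < z"
    moreover have "(g has_real_derivative h s) (at s)"
      unfolding g_def gap h_def using assms
      by (auto intro!: derivative_eq_intros simp: field_simps power2_eq_square)
    ultimately show "\<exists>y. (g has_real_derivative y) (at s) \<and> 0 \<le> y"
      using h_nonneg by auto
  qed (use assms in \<open>unfold g_def gap, auto intro!: continuous_intros\<close>)
  then show ?thesis
    by (simp add: g_def gap)
qed

lemma Psi_diff_scaled:
  "Psi E w \<mu> F v x - c * Psi E w \<mu> G v x = Psi E w \<mu> (\<lambda>z. F z - c * G z) v x"
  by (simp add: Psi_def sum_subtractf sum_distrib_left algebra_simps)

lemma Psi_add_const: "Psi E w \<mu> H (\<lambda>y. v y + c) x = Psi E w \<mu> H v x"
  by (simp add: Psi_def)

lemma Psi_nonneg: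
  assumes "\<mu> x > 0" "\<And>y. E x y \<Longrightarrow> 0 \<le> w x y" "\<And>z. 0 \<le> H z"
  shows "0 \<le> Psi E w \<mu> H v x"
  unfolding Psi_def using assms by (intro mult_nonneg_nonneg sum_nonneg) auto

lemma Psi_ge_edge:
  assumes "finite {y. E x y}" "E x y" "\<mu> x > 0" "\<And>y. E x y \<Longrightarrow> 0 \<le> w x y" "\<And>z. 0 \<le> H z"
  shows "w x y / \<mu> x * H (v y - v x) \<le> Psi E w \<mu> H v x"
proof -
  have "w x y * H (v y - v x) \<le> (\<Sum>y\<in>{y. E x y}. w x y * H (v y - v x))"
    using assms by (intro member_le_sum) auto
  then have "w x y * H (v y - v x) / \<mu> x \<le> (\<Sum>y\<in>{y. E x y}. w x y * H (v y - v x)) / \<mu> x"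
    using assms(3) by (simp add: divide_right_mono)
  then show ?thesis
    by (simp add: Psi_def)
qed

lemma gdist_walk:
  assumes "graph_connected E" shows "(E ^^ gdist E x y) x y"
  using assms unfolding graph_connected_def gdist_def by (metis LeastI_ex)

lemma integral_has_real_derivative_at:
  assumes "continuous_on {a..} f" "a < t"
  shows "((\<lambda>s. integral {a..s} f) has_real_derivative f t) (at t)"
proof -
  have "continuous_on {a..t + 1} f"
    using assms(1) by (rule continuous_on_subset) auto
  then have "((\<lambda>s. integral {a..s} f) has_real_derivative f t) (at t within {a..t + 1})"
    using integral_has_real_derivative assms(2) by auto
  moreover have "at t within {a..t + 1} = at t"
    by (rule at_within_interior) (use assms(2) in auto)
  ultimately show ?thesis
    by simp
qed

text \<open>
  If the bound failed, take a maximum point \<open>t\<^sub>m\<close> of \<open>\<psi> t = (t - s)(V\<^sub>x(s) - V\<^sub>y(t)) - K\<close> on \<open>[s,s']\<close>.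
  Then \<open>\<psi> t\<^sub>m > 0\<close> forces \<open>t\<^sub>m > s\<close> and \<open>V\<^sub>y(t\<^sub>m) < V\<^sub>x(s) \<le> V\<^sub>x(t\<^sub>m)\<close>, so the Riccati inequality
  gives \<open>\<psi>'(t\<^sub>m) < 0\<close> and \<open>\<psi>\<close> is larger just left of \<open>t\<^sub>m\<close>.
\<close>
lemma riccati_comparison:
  fixes Vx Vy Vy' :: "real \<Rightarrow> real" and K s s' :: real
  assumes "s < s'" and "K > 0"
    and deriv: "\<And>t. t \<in> {s..s'} \<Longrightarrow> (Vy has_real_derivative Vy' t) (at t)"
    and mono: "\<And>t. t \<in> {s..s'} \<Longrightarrow> Vx s \<le> Vx t"
    and riccati: "\<And>t. t \<in> {s..s'} \<Longrightarrow> Vy t \<le> Vx t \<Longrightarrow> (Vx t - Vy t)\<^sup>2 / K \<le> Vy' t"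
  shows "Vx s \<le> Vy s' + K / (s' - s)"
proof (rule ccontr)
  assume "\<not> ?thesis"
  then have psi_s': "K < (s' - s) * (Vx s - Vy s')"
    using assms(1) by (simp add: field_simps)
  define \<psi> where "\<psi> t = (t - s) * (Vx s - Vy t) - K" for t
  have psi_deriv: "(\<psi> has_real_derivative (Vx s - Vy t) - (t - s) * Vy' t) (at t)"
    if "t \<in> {s..s'}" for t
    unfolding \<psi>_def using deriv[OF that] by (auto intro!: derivative_eq_intros)
  have "continuous_on {s..s'} \<psi>"
    by (rule continuous_at_imp_continuous_on) (use psi_deriv DERIV_isCont in blast)
  then obtain tm where tm: "tm \<in> {s..s'}" and max: "\<And>t. t \<in> {s..s'} \<Longrightarrow> \<psi> t \<le> \<psi> tm"
    using continuous_attains_sup[of "{s..s'}" \<psi>] assms(1) by auto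
  have "\<psi> s' \<le> \<psi> tm"
    using max assms(1) by auto
  then have psi_tm: "K < (tm - s) * (Vx s - Vy tm)"
    using psi_s' by (simp add: \<psi>_def)
  define D where "D = Vx s - Vy tm"
  have "0 < (tm - s) * D"
    using psi_tm \<open>K > 0\<close> by (simp add: D_def)
  then have tm_gt: "tm > s" and D_pos: "D > 0"
    using tm by (auto simp: zero_less_mult_iff)
  have D_le: "D \<le> Vx tm - Vy tm"
    using mono[OF tm] by (simp add: D_def)
  then have "D\<^sup>2 / K \<le> (Vx tm - Vy tm)\<^sup>2 / K"
    using D_pos \<open>K > 0\<close> by (intro divide_right_mono power_mono) auto
  also have "\<dots> \<le> Vy' tm"
    using riccati[OF tm] D_le D_pos by simp
  finally have "D\<^sup>2 / K \<le> Vy' tm" .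
  then have "(tm - s) * (D\<^sup>2 / K) \<le> (tm - s) * Vy' tm"
    using tm_gt by (intro mult_left_mono) auto
  moreover have "D < (tm - s) * (D\<^sup>2 / K)"
  proof -
    have "K * D < ((tm - s) * D) * D"
      using psi_tm D_pos unfolding D_def[symmetric] by simp
    then show ?thesis
      using \<open>K > 0\<close> by (simp add: field_simps power2_eq_square)
  qed
  ultimately have "(Vx s - Vy tm) - (tm - s) * Vy' tm < 0"
    by (simp add: D_def)
  then obtain d where d: "d > 0" "\<And>h. h > 0 \<Longrightarrow> h < d \<Longrightarrow> \<psi> tm < \<psi> (tm - h)"
    using DERIV_neg_dec_left[OF psi_deriv[OF tm]] by blast
  define h where "h = min (d / 2) (tm - s)"
  have "h > 0" "h < d" "tm - h \<in> {s..s'}"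
    using d tm tm_gt by (auto simp: h_def)
  then show False
    using d(2) max by fastforce
qed

text \<open>
  For a walk of \<open>n + 1\<close> edges the time interval is split at
  \<open>m = s + n (s' - s)/(n + 1)\<close>, which balances \<open>K n\<^sup>2/(m - s) + K/(s' - m)\<close> to
  \<open>K (n + 1)\<^sup>2/(s' - s)\<close>.
\<close>
lemma bound_along_walk:
  fixes V :: "real \<Rightarrow> 'a \<Rightarrow> real" and K T0 :: real
  assumes mono: "\<And>x s t. T0 < s \<Longrightarrow> s \<le> t \<Longrightarrow> V s x \<le> V t x"
    and step: "\<And>x y s s'. E x y \<Longrightarrow> T0 < s \<Longrightarrow> s < s' \<Longrightarrow> V s x \<le> V s' y + K / (s' - s)"
  shows "(E ^^ n) x y \<Longrightarrow> T0 < s \<Longrightarrow> s < s' \<Longrightarrow> V s x \<le> V s' y + K * (real n)\<^sup>2 / (s' - s)"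
proof (induction n arbitrary: y s')
  case 0
  then show ?case
    using mono[of s s' x] by simp
next
  case (Suc n)
  then obtain z where z: "(E ^^ n) x z" "E z y"
    by auto
  show ?case
  proof (cases "n = 0")
    case True
    then show ?thesis
      using step[OF z(2) Suc.prems(2,3)] z(1) by simp
  next
    case False
    define m where "m = s + real n * (s' - s) / (real n + 1)"
    have m_s: "m - s = real n * (s' - s) / (real n + 1)"
      by (simp add: m_def)
    have s'_m: "s' - m = (s' - s) / (real n + 1)"
      by (simp add: m_def field_simps)
    have "s < m"
      using False Suc.prems(3) by (simp add: m_def)
    have "0 < s' - m"
      unfolding s'_m using Suc.prems(3) by simp
    then have "m < s'"
      by simp
    have "V s x \<le> V m z + K * (real n)\<^sup>2 / (m - s)"
      using Suc.IH[OF z(1) Suc.prems(2) \<open>s < m\<close>] .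
    also have "V m z \<le> V s' y + K / (s' - m)"
      using step[OF z(2) _ \<open>m < s'\<close>] Suc.prems(2) \<open>s < m\<close> by simp
    finally have "V s x \<le> V s' y + (K * (real n)\<^sup>2 / (m - s) + K / (s' - m))"
      by simp
    also have "K * (real n)\<^sup>2 / (m - s) = K * real n * (real n + 1) / (s' - s)"
      unfolding m_s using False Suc.prems(3) by (simp add: field_simps power2_eq_square)
    also have "K / (s' - m) = K * (real n + 1) / (s' - s)"
      unfolding s'_m using Suc.prems(3) by (simp add: field_simps)
    also have "K * real n * (real n + 1) / (s' - s) + K * (real n + 1) / (s' - s)
             = K * (real (Suc n))\<^sup>2 / (s' - s)"
      unfolding add_divide_distrib[symmetric] by (simp add: algebra_simps power2_eq_square)
    finally show ?thesis .
  qed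
qed

locale Upsilon_gap_supersolution =
  fixes E :: "'a \<Rightarrow> 'a \<Rightarrow> bool" and w :: "'a \<Rightarrow> 'a \<Rightarrow> real" and \<mu> :: "'a \<Rightarrow> real"
    and w_min \<mu>_max \<alpha> T0 :: real and V V' :: "real \<Rightarrow> 'a \<Rightarrow> real"
  assumes sym: "\<And>x y. E x y \<Longrightarrow> E y x"
    and lf: "locally_finite E"
    and w_min_pos: "w_min > 0"
    and w_min: "\<And>x y. E x y \<Longrightarrow> w_min \<le> w x y"
    and mu_pos: "\<And>x. \<mu> x > 0"
    and mu_max: "\<And>x. \<mu> x \<le> \<mu>_max"
    and alpha: "0 < \<alpha>" "\<alpha> < 1"
    and V_deriv: "\<And>t x. T0 < t \<Longrightarrow> ((\<lambda>s. V s x) has_real_derivative V' t x) (at t)"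
    and V'_ge: "\<And>t x. T0 < t \<Longrightarrow> Psi E w \<mu> (Upsilon_gap \<alpha>) (V t) x \<le> V' t x"
begin

lemma w_nonneg: "E x y \<Longrightarrow> 0 \<le> w x y"
  using w_min w_min_pos by (meson less_le_trans less_imp_le)

lemma V'_nonneg:
  assumes "T0 < t" shows "0 \<le> V' t x"
proof -
  have "0 \<le> Psi E w \<mu> (Upsilon_gap \<alpha>) (V t) x"
    by (intro Psi_nonneg mu_pos w_nonneg Upsilon_gap_nonneg[OF alpha])
  then show ?thesis
    using V'_ge[OF assms, of x] by linarith
qed

lemma V_mono:
  assumes "T0 < s" "s \<le> t" shows "V s x \<le> V t x"
proof (rule DERIV_nonneg_imp_increasing_open[OF assms(2)])
  fix r assume "s < r" "r < t"
  then show "\<exists>y. ((\<lambda>t. V t x) has_real_derivative y) (at r) \<and> 0 \<le> y"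
    using V_deriv V'_nonneg assms(1) by (meson less_trans)
next
  have "isCont (\<lambda>t. V t x) r" if "r \<in> {s..t}" for r
    using V_deriv[THEN DERIV_isCont] that assms(1) by auto
  then show "continuous_on {s..t} (\<lambda>t. V t x)"
    by (rule continuous_at_imp_continuous_on[rule_format])
qed

lemma V'_ge_edge:
  assumes "T0 < t" "E x y"
  shows "w_min / \<mu>_max * Upsilon_gap \<alpha> (V t y - V t x) \<le> V' t x"
proof -
  have "w_min / \<mu>_max \<le> w x y / \<mu> x"
    using w_min[OF assms(2)] w_min_pos mu_pos[of x] mu_max[of x] by (intro frac_le) auto
  then have "w_min / \<mu>_max * Upsilon_gap \<alpha> (V t y - V t x)
      \<le> w x y / \<mu> x * Upsilon_gap \<alpha> (V t y - V t x)"
    using Upsilon_gap_nonneg[OF alpha] by (rule mult_right_mono)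
  also have "\<dots> \<le> Psi E w \<mu> (Upsilon_gap \<alpha>) (V t) x"
    using lf assms(2) mu_pos w_nonneg Upsilon_gap_nonneg[OF alpha]
    by (intro Psi_ge_edge) (auto simp: locally_finite_def)
  also have "\<dots> \<le> V' t x"
    using V'_ge[OF assms(1)] .
  finally show ?thesis .
qed

lemma edge_step:
  assumes "E x y" "T0 < s" "s < s'"
  shows "V s x \<le> V s' y + 2 * \<mu>_max / (w_min * (1 - \<alpha>)) / (s' - s)"
proof (rule riccati_comparison[where Vy' = "\<lambda>t. V' t y", OF assms(3)])
  have "\<mu>_max > 0"
    using mu_pos mu_max by (meson less_le_trans)
  then show "2 * \<mu>_max / (w_min * (1 - \<alpha>)) > 0"
    using w_min_pos alpha by simp
  fix t assume t: "t \<in> {s..s'}"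
  then have "T0 < t"
    using assms by auto
  then show "((\<lambda>t. V t y) has_real_derivative V' t y) (at t)"
    by (rule V_deriv)
  show "V s x \<le> V t x"
    using V_mono t assms(2) by auto
  assume "V t y \<le> V t x"
  then have "(V t x - V t y)\<^sup>2 / (2 * \<mu>_max / (w_min * (1 - \<alpha>)))
      = w_min / \<mu>_max * ((1 - \<alpha>) / 2 * (V t x - V t y)\<^sup>2)"
    using \<open>\<mu>_max > 0\<close> by (simp add: field_simps)
  also have "\<dots> \<le> w_min / \<mu>_max * Upsilon_gap \<alpha> (V t x - V t y)"
    using Upsilon_gap_ge_square[OF alpha] \<open>V t y \<le> V t x\<close> \<open>\<mu>_max > 0\<close> w_min_pos
    by (intro mult_left_mono) auto
  also have "\<dots> \<le> V' t y"
    using V'_ge_edge[OF \<open>T0 < t\<close> sym[OF assms(1)]] .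
  finally show "(V t x - V t y)\<^sup>2 / (2 * \<mu>_max / (w_min * (1 - \<alpha>))) \<le> V' t y" .
qed

lemma harnack:
  assumes "graph_connected E" "T0 < t1" "t1 < t2"
  shows "V t1 x1 \<le> V t2 x2
           + 2 * \<mu>_max * real (gdist E x1 x2) ^ 2 / (w_min * (1 - \<alpha>) * (t2 - t1))"
  using bound_along_walk[OF V_mono edge_step gdist_walk[OF assms(1)] assms(2,3)]
  by (simp add: field_simps)

end

theorem theorem6p2:
  fixes E :: "'a \<Rightarrow> 'a \<Rightarrow> bool" and w :: "'a \<Rightarrow> 'a \<Rightarrow> real" and \<mu> :: "'a \<Rightarrow> real"
    and w_min \<mu>_max \<alpha> :: real
    and u u' :: "real \<Rightarrow> 'a \<Rightarrow> real" and \<eta> :: "real \<Rightarrow> real"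
    and t1 t2 :: real and x1 x2 :: 'a
  assumes sym: "\<And>x y. E x y \<Longrightarrow> E y x"
    and lf: "locally_finite E"
    and conn: "graph_connected E"
    and w_sym: "\<And>x y. E x y \<Longrightarrow> w x y = w y x"
    and w_min_pos: "w_min > 0"
    and w_min: "\<And>x y. E x y \<Longrightarrow> w x y \<ge> w_min"
    and mu_pos: "\<And>x. \<mu> x > 0"
    and mu_max: "\<And>x. \<mu> x \<le> \<mu>_max"
    and alpha: "0 < \<alpha>" "\<alpha> < 1"
    and u_pos: "\<And>t x. t > 0 \<Longrightarrow> u t x > 0"
    and u_deriv: "\<And>t x. t > 0 \<Longrightarrow> ((\<lambda>s. u s x) has_real_derivative u' t x) (at t)"
    and u'_cont: "\<And>x. continuous_on {0<..} (\<lambda>t. u' t x)"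
    and eta_cont: "continuous_on {0<..} \<eta>"
    and eta_nonneg: "\<And>t. t > 0 \<Longrightarrow> \<eta> t \<ge> 0"
    and ineq: "\<And>t x. t > 0 \<Longrightarrow>
       u' t x / u t x \<ge> Psi E w \<mu> Upsilon (\<lambda>y. ln (u t y)) x
                        - (1 / \<alpha>) * Psi E w \<mu> (Upsilon_alpha \<alpha>) (\<lambda>y. ln (u t y)) x
                        - \<eta> t"
    and t12: "0 < t1" "t1 < t2"
  shows "u t1 x1 \<le> u t2 x2 * exp (integral {t1..t2} \<eta>
           + 2 * \<mu>_max * real (gdist E x1 x2) ^ 2 / (w_min * (1 - \<alpha>) * (t2 - t1)))"
proof -
  define T0 where "T0 = t1 / 2"
  have T0: "0 < T0" "T0 < t1"
    using t12 by (auto simp: T0_def)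
  have eta_cont_T0: "continuous_on {T0..} \<eta>"
    using eta_cont by (rule continuous_on_subset) (use T0 in auto)
  define V where "V t x = ln (u t x) + integral {T0..t} \<eta>" for t x
  interpret Upsilon_gap_supersolution E w \<mu> w_min \<mu>_max \<alpha> T0 V "\<lambda>t x. u' t x / u t x + \<eta> t"
  proof
    fix t x assume "T0 < t"
    then show "((\<lambda>s. V s x) has_real_derivative u' t x / u t x + \<eta> t) (at t)"
      unfolding V_def using T0 u_deriv u_pos integral_has_real_derivative_at[OF eta_cont_T0]
      by (auto intro!: derivative_eq_intros simp: field_simps)
    have "Psi E w \<mu> (Upsilon_gap \<alpha>) (V t) x
        = Psi E w \<mu> Upsilon (\<lambda>y. ln (u t y)) x
          - (1 / \<alpha>) * Psi E w \<mu> (Upsilon_alpha \<alpha>) (\<lambda>y. ln (u t y)) x"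
      unfolding V_def Psi_add_const Psi_diff_scaled Upsilon_gap_def[abs_def] ..
    then show "Psi E w \<mu> (Upsilon_gap \<alpha>) (V t) x \<le> u' t x / u t x + \<eta> t"
      using ineq[of t x] T0 \<open>T0 < t\<close> by simp
  qed (fact sym lf w_min_pos w_min mu_pos mu_max alpha)+
  have "integral {T0..t1} \<eta> + integral {t1..t2} \<eta> = integral {T0..t2} \<eta>"
    using integrable_continuous_real[OF continuous_on_subset[OF eta_cont_T0]] T0 t12
    by (intro Henstock_Kurzweil_Integration.integral_combine) auto
  then have "ln (u t1 x1) \<le> ln (u t2 x2) + (integral {t1..t2} \<eta>
           + 2 * \<mu>_max * real (gdist E x1 x2) ^ 2 / (w_min * (1 - \<alpha>) * (t2 - t1)))"
    using harnack[OF conn T0(2) t12(2), of x1 x2] by (simp add: V_def)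
  then have "exp (ln (u t1 x1)) \<le> exp (ln (u t2 x2) + (integral {t1..t2} \<eta>
           + 2 * \<mu>_max * real (gdist E x1 x2) ^ 2 / (w_min * (1 - \<alpha>) * (t2 - t1))))"
    by (rule exp_mono)
  then show ?thesis
    using u_pos t12 by (simp add: exp_add)
qed

end
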